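(* Let $s\in\mathbb N$, $R,p,\beta>0$, and let $\mathcal G$ be an $s$-uniform hypergraph. If $\mathcal G[W]$ is $(p,R)$-Janson for every $W\subset V(\mathcal G)$ with $|W|\ge(1-\beta)v(\mathcal G)$, then there exists $\mu:\mathcal G\to\mathbb R_{\ge0}$ with $$e(\mu)=\sqrt R,\qquad\Lambda_p(\mu)<\frac{e(\mu)^2}{R}\qquad\text{and}\qquad\sum_{v\in V(\mathcal G)}d_\mu(v)^2\le\frac{2s^2e(\mu)^2}{\beta\,v(\mathcal G)}.$$
   Context: A hypergraph is identified with its edge set; $v(\mathcal G)=|V(\mathcal G)|$; $\mathcal G[W]=\{E\in\mathcal G:E\subset W\}$. For $\nu:\mathcal G\to\mathbb R_{\ge0}$: $e(\nu)=\sum_E\nu(E)$, $d_\nu(L)=\sum_{E\in\mathcal G,L\subset E}\nu(E)$ (with $d_\nu(v)=d_\nu(\{v\})$), $\Lambda_p(\nu)=\sum_{L\subset V(\mathcal G),|L|\ge2}d_\nu(L)^2p^{-|L|}$. $\mathcal G$ is $(p,R)$-Janson if some $\nu:\mathcal G\to\mathbb R_{\ge0}$ has $\Lambda_p(\nu)<e(\nu)^2/R$. *)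

theory Defs
  imports Complex_Main
begin

text \<open>A hypergraph is identified with its edge set G; its vertex set is the union of the edges.\<close>

definition hverts :: "'a set set \<Rightarrow> 'a set" where
  "hverts G = \<Union>G"

definition induced :: "'a set set \<Rightarrow> 'a set \<Rightarrow> 'a set set" where
  "induced G W = {E \<in> G. E \<subseteq> W}"

definition uniform :: "nat \<Rightarrow> 'a set set \<Rightarrow> bool" where
  "uniform s G \<longleftrightarrow> finite G \<and> (\<forall>E\<in>G. finite E \<and> card E = s)"

definition hsize :: "'a set set \<Rightarrow> ('a set \<Rightarrow> real) \<Rightarrow> real" where
  "hsize G \<nu> = (\<Sum>E\<in>G. \<nu> E)"

definition hdeg :: "'a set set \<Rightarrow> ('a set \<Rightarrow> real) \<Rightarrow> 'a set \<Rightarrow> real" where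
  "hdeg G \<nu> L = (\<Sum>E\<in>{E\<in>G. L \<subseteq> E}. \<nu> E)"

definition Lambda :: "real \<Rightarrow> 'a set set \<Rightarrow> ('a set \<Rightarrow> real) \<Rightarrow> real" where
  "Lambda p G \<nu> = (\<Sum>L\<in>{L. L \<subseteq> hverts G \<and> card L \<ge> 2}. (hdeg G \<nu> L)\<^sup>2 * inverse p ^ card L)"

definition janson :: "real \<Rightarrow> real \<Rightarrow> 'a set set \<Rightarrow> bool" where
  "janson p R G \<longleftrightarrow> (\<exists>\<nu>. (\<forall>E\<in>G. \<nu> E \<ge> 0) \<and> Lambda p G \<nu> < (hsize G \<nu>)\<^sup>2 / R)"

end

theory Submission
  imports Defs "HOL-Analysis.L2_Norm"
begin

text \<open>
  Build the weight greedily, one unit of total weight per round. With current weight \<open>T\<close> of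
  size \<open>k\<close> and \<open>a = s / (\<beta> n)\<close>, double counting \<open>\<Sum>\<^sub>v d\<^sub>T(v) = s k\<close> shows that at most
  \<open>\<beta> n\<close> vertices have degree above \<open>a k\<close>; the remaining set \<open>W\<close> is large, so \<open>G[W]\<close> carries a
  Janson weight, which we normalise to size 1 and add to \<open>T\<close>. Since \<open>\<nu> \<mapsto> \<surd>\<Lambda>\<^sub>p(\<nu>)\<close> is a
  weighted \<open>\<ell>\<^sup>2\<close>-norm of the degree vector, it grows by less than \<open>1/\<surd>R\<close> per round, while only
  vertices of degree at most \<open>a k\<close> gain degree (at most 1). After \<open>N \<ge> 1/a\<close> rounds every degree
  is at most \<open>2 a N\<close>, hence \<open>\<Sum>\<^sub>v d(v)\<^sup>2 \<le> 2 a N \<cdot> s N\<close>; rescaling to size \<open>\<surd>R\<close> finishes.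
\<close>

definition robustly_janson :: "real \<Rightarrow> real \<Rightarrow> real \<Rightarrow> 'a set set \<Rightarrow> bool" where
  "robustly_janson p R \<beta> G \<longleftrightarrow>
     (\<forall>W. W \<subseteq> hverts G \<and> real (card W) \<ge> (1 - \<beta>) * real (card (hverts G))
        \<longrightarrow> janson p R (induced G W))"

lemma uniform_finite:
  assumes "uniform s G"
  shows "finite G" "finite (hverts G)"
  using assms unfolding uniform_def hverts_def by auto

lemma hsize_scale: "hsize G (\<lambda>E. c * \<nu> E) = c * hsize G \<nu>"
  unfolding hsize_def by (simp add: sum_distrib_left)

lemma hdeg_scale: "hdeg G (\<lambda>E. c * \<nu> E) L = c * hdeg G \<nu> L"
  unfolding hdeg_def by (simp add: sum_distrib_left)

lemma sum_hdeg_singleton_sq_scale: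
  "(\<Sum>v\<in>V. (hdeg G (\<lambda>E. c * \<nu> E) {v})\<^sup>2) = c\<^sup>2 * (\<Sum>v\<in>V. (hdeg G \<nu> {v})\<^sup>2)"
  unfolding hdeg_scale by (simp add: sum_distrib_left power_mult_distrib)

lemma Lambda_scale: "Lambda p G (\<lambda>E. c * \<nu> E) = c\<^sup>2 * Lambda p G \<nu>"
  unfolding Lambda_def hdeg_scale by (simp add: sum_distrib_left power_mult_distrib mult.assoc)

lemma hsize_add: "hsize G (\<lambda>E. \<mu> E + \<nu> E) = hsize G \<mu> + hsize G \<nu>"
  unfolding hsize_def by (simp add: sum.distrib)

lemma hdeg_add: "hdeg G (\<lambda>E. \<mu> E + \<nu> E) L = hdeg G \<mu> L + hdeg G \<nu> L"
  unfolding hdeg_def by (simp add: sum.distrib)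

lemma hsize_nonneg: "\<forall>E\<in>G. \<nu> E \<ge> 0 \<Longrightarrow> hsize G \<nu> \<ge> 0"
  unfolding hsize_def by (intro sum_nonneg) auto

lemma hdeg_nonneg: "\<forall>E\<in>G. \<nu> E \<ge> 0 \<Longrightarrow> hdeg G \<nu> L \<ge> 0"
  unfolding hdeg_def by (intro sum_nonneg) auto

lemma hdeg_le_hsize:
  assumes "finite G" "\<forall>E\<in>G. \<nu> E \<ge> 0"
  shows "hdeg G \<nu> L \<le> hsize G \<nu>"
  unfolding hdeg_def hsize_def using assms by (intro sum_mono2) auto

lemma Lambda_nonneg: "p > 0 \<Longrightarrow> Lambda p G \<nu> \<ge> 0"
  unfolding Lambda_def by (intro sum_nonneg) simp

lemma sqrt_Lambda_eq_L2_set: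
  assumes "p > 0"
  shows "sqrt (Lambda p G \<nu>)
    = L2_set (\<lambda>L. hdeg G \<nu> L * sqrt (inverse p ^ card L)) {L. L \<subseteq> hverts G \<and> card L \<ge> 2}"
  unfolding L2_set_def Lambda_def using assms by (simp add: power_mult_distrib)

lemma sqrt_Lambda_add_le:
  assumes "p > 0"
  shows "sqrt (Lambda p G (\<lambda>E. \<mu> E + \<nu> E)) \<le> sqrt (Lambda p G \<mu>) + sqrt (Lambda p G \<nu>)"
  unfolding sqrt_Lambda_eq_L2_set[OF assms] hdeg_add
  using L2_set_triangle_ineq[of "\<lambda>L. hdeg G \<mu> L * sqrt (inverse p ^ card L)"
      "\<lambda>L. hdeg G \<nu> L * sqrt (inverse p ^ card L)"]
  by (simp add: distrib_right)

lemma Lambda_lt_scale_iff: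
  assumes "c \<noteq> 0"
  shows "Lambda p G (\<lambda>E. c * \<nu> E) < (hsize G (\<lambda>E. c * \<nu> E))\<^sup>2 / R
     \<longleftrightarrow> Lambda p G \<nu> < (hsize G \<nu>)\<^sup>2 / R"
  unfolding Lambda_scale hsize_scale using assms
  by (simp add: power_mult_distrib times_divide_eq_right[symmetric] del: times_divide_eq_right)

lemma sum_hdeg_singleton:
  assumes "uniform s G"
  shows "(\<Sum>v\<in>hverts G. hdeg G \<nu> {v}) = real s * hsize G \<nu>"
proof -
  have fin: "finite G" "finite (hverts G)" using uniform_finite[OF assms] .
  have "(\<Sum>v\<in>hverts G. hdeg G \<nu> {v}) = (\<Sum>v\<in>hverts G. \<Sum>E\<in>G. if v \<in> E then \<nu> E else 0)"
    unfolding hdeg_def using fin(1)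
    by (intro sum.cong[OF refl]) (simp add: sum.inter_restrict Collect_conj_eq)
  also have "\<dots> = (\<Sum>E\<in>G. \<Sum>v\<in>hverts G. if v \<in> E then \<nu> E else 0)"
    by (rule sum.swap)
  also have "\<dots> = (\<Sum>E\<in>G. real s * \<nu> E)"
  proof (rule sum.cong[OF refl])
    fix E assume E: "E \<in> G"
    then have "hverts G \<inter> E = E" unfolding hverts_def by auto
    with E assms fin show "(\<Sum>v\<in>hverts G. if v \<in> E then \<nu> E else 0) = real s * \<nu> E"
      by (simp add: sum.If_cases uniform_def)
  qed
  finally show ?thesis unfolding hsize_def by (simp add: sum_distrib_left)
qed

lemma hsize_zero_extension:
  assumes "finite G"
  shows "hsize G (\<lambda>E. if E \<subseteq> W then \<nu> E else 0) = hsize (induced G W) \<nu>"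
proof -
  have "hsize G (\<lambda>E. if E \<subseteq> W then \<nu> E else 0) = (\<Sum>E\<in>G \<inter> {E. E \<subseteq> W}. \<nu> E)"
    unfolding hsize_def using assms by (simp add: sum.inter_restrict)
  also have "G \<inter> {E. E \<subseteq> W} = induced G W" unfolding induced_def by auto
  finally show ?thesis unfolding hsize_def .
qed

lemma hdeg_zero_extension:
  assumes "finite G"
  shows "hdeg G (\<lambda>E. if E \<subseteq> W then \<nu> E else 0) L = hdeg (induced G W) \<nu> L"
proof -
  have "hdeg G (\<lambda>E. if E \<subseteq> W then \<nu> E else 0) L
      = (\<Sum>E\<in>{E\<in>G. L \<subseteq> E} \<inter> {E. E \<subseteq> W}. \<nu> E)"
    unfolding hdeg_def using assms by (simp add: sum.inter_restrict)
  also have "{E\<in>G. L \<subseteq> E} \<inter> {E. E \<subseteq> W} = {E\<in>induced G W. L \<subseteq> E}"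
    unfolding induced_def by auto
  finally show ?thesis unfolding hdeg_def .
qed

lemma Lambda_zero_extension:
  assumes "finite G" "finite (hverts G)"
  shows "Lambda p G (\<lambda>E. if E \<subseteq> W then \<nu> E else 0) = Lambda p (induced G W) \<nu>"
proof -
  let ?S = "{L. L \<subseteq> hverts G \<and> card L \<ge> 2}"
  let ?T = "{L. L \<subseteq> hverts (induced G W) \<and> card L \<ge> 2}"
  have "?T \<subseteq> ?S" unfolding hverts_def induced_def by auto
  moreover have "finite ?S" using assms(2) by (simp add: finite_subset)
  moreover have "hdeg (induced G W) \<nu> L = 0" if "L \<in> ?S - ?T" for L
  proof -
    have "{E\<in>induced G W. L \<subseteq> E} = {}" using that unfolding hverts_def by blast
    then show ?thesis unfolding hdeg_def by (simp only: sum.empty)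
  qed
  ultimately show ?thesis
    unfolding Lambda_def hdeg_zero_extension[OF assms(1)] by (intro sum.mono_neutral_right) auto
qed

lemma janson_induced_unit_weight:
  assumes "p > 0" "finite G" "finite (hverts G)" "janson p R (induced G W)"
  obtains \<nu> where "\<forall>E\<in>G. \<nu> E \<ge> 0" "\<forall>E\<in>G. \<not> E \<subseteq> W \<longrightarrow> \<nu> E = 0"
    "hsize G \<nu> = 1" "Lambda p G \<nu> < 1 / R"
proof -
  obtain \<nu>\<^sub>W where nonneg: "\<forall>E\<in>induced G W. \<nu>\<^sub>W E \<ge> 0"
    and small: "Lambda p (induced G W) \<nu>\<^sub>W < (hsize (induced G W) \<nu>\<^sub>W)\<^sup>2 / R"
    using assms(4) unfolding janson_def by blast
  define \<nu>\<^sub>G where "\<nu>\<^sub>G = (\<lambda>E. if E \<subseteq> W then \<nu>\<^sub>W E else 0)"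
  define e where "e = hsize G \<nu>\<^sub>G"
  have small\<^sub>G: "Lambda p G \<nu>\<^sub>G < e\<^sup>2 / R"
    using small unfolding e_def \<nu>\<^sub>G_def
    by (simp only: Lambda_zero_extension[OF assms(2,3)] hsize_zero_extension[OF assms(2)])
  have "e \<noteq> 0" using small\<^sub>G Lambda_nonneg[OF assms(1), of G \<nu>\<^sub>G] by auto
  show thesis
  proof
    show "\<forall>E\<in>G. inverse e * \<nu>\<^sub>G E \<ge> 0"
      using nonneg hsize_nonneg[of G \<nu>\<^sub>G] unfolding e_def \<nu>\<^sub>G_def induced_def by auto
    show "\<forall>E\<in>G. \<not> E \<subseteq> W \<longrightarrow> inverse e * \<nu>\<^sub>G E = 0" unfolding \<nu>\<^sub>G_def by simp
    show "hsize G (\<lambda>E. inverse e * \<nu>\<^sub>G E) = 1" using \<open>e \<noteq> 0\<close> unfolding hsize_scale e_def by simp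
    then show "Lambda p G (\<lambda>E. inverse e * \<nu>\<^sub>G E) < 1 / R"
      using small\<^sub>G Lambda_lt_scale_iff[of "inverse e" p G \<nu>\<^sub>G R] \<open>e \<noteq> 0\<close> unfolding e_def by simp
  qed
qed

lemma card_high_hdeg_le:
  assumes "uniform s G" "\<forall>E\<in>G. \<nu> E \<ge> 0" "a > 0" "real s \<le> a * b"
  shows "real (card {v\<in>hverts G. hdeg G \<nu> {v} > a * hsize G \<nu>}) \<le> b"
proof -
  let ?H = "{v\<in>hverts G. hdeg G \<nu> {v} > a * hsize G \<nu>}"
  have "b \<ge> 0" using assms(3,4) by (smt (verit) of_nat_0_le_iff zero_le_mult_iff)
  show ?thesis
  proof (cases "hsize G \<nu> = 0")
    case True
    then have "hdeg G \<nu> {v} \<le> a * hsize G \<nu>" for v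
      using hdeg_le_hsize[OF uniform_finite(1)[OF assms(1)] assms(2)] by simp
    then have "?H = {}" by (simp add: not_less)
    with \<open>b \<ge> 0\<close> show ?thesis by (metis card.empty of_nat_0)
  next
    case False
    then have pos: "a * hsize G \<nu> > 0" using hsize_nonneg[OF assms(2)] assms(3) by simp
    have "real (card ?H) * (a * hsize G \<nu>) \<le> (\<Sum>v\<in>?H. hdeg G \<nu> {v})"
      by (rule sum_bounded_below) simp
    also have "\<dots> \<le> (\<Sum>v\<in>hverts G. hdeg G \<nu> {v})"
      using uniform_finite(2)[OF assms(1)] hdeg_nonneg[OF assms(2)] by (intro sum_mono2) auto
    also have "\<dots> = real s * hsize G \<nu>" by (rule sum_hdeg_singleton[OF assms(1)])
    also have "\<dots> \<le> b * (a * hsize G \<nu>)"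
      using mult_right_mono[OF assms(4) hsize_nonneg[OF assms(2)]] by (simp add: algebra_simps)
    finally show ?thesis using pos by (rule mult_right_le_imp_le)
  qed
qed

lemma sum_hdeg_singleton_sq_le:
  assumes "uniform s G" "\<forall>E\<in>G. \<nu> E \<ge> 0" "\<forall>v\<in>hverts G. hdeg G \<nu> {v} \<le> D"
  shows "(\<Sum>v\<in>hverts G. (hdeg G \<nu> {v})\<^sup>2) \<le> D * (real s * hsize G \<nu>)"
proof -
  have "(\<Sum>v\<in>hverts G. (hdeg G \<nu> {v})\<^sup>2) \<le> (\<Sum>v\<in>hverts G. D * hdeg G \<nu> {v})"
    using assms(3) hdeg_nonneg[OF assms(2)]
    by (intro sum_mono) (simp add: power2_eq_square mult_right_mono)
  also have "\<dots> = D * (real s * hsize G \<nu>)"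
    by (simp add: sum_distrib_left[symmetric] sum_hdeg_singleton[OF assms(1)])
  finally show ?thesis .
qed

lemma greedy_round:
  assumes "p > 0" "R > 0" "uniform s G" "robustly_janson p R \<beta> G"
    and "a > 0" "real s \<le> a * (\<beta> * real (card (hverts G)))"
    and T_nonneg: "\<forall>E\<in>G. T E \<ge> 0" and T_size: "hsize G T = k"
    and T_Lambda: "sqrt (Lambda p G T) \<le> k / sqrt R"
    and T_deg: "\<forall>v\<in>hverts G. hdeg G T {v} \<le> a * k + 1"
  shows "\<exists>T'. (\<forall>E\<in>G. T' E \<ge> 0) \<and> hsize G T' = k + 1 \<and> sqrt (Lambda p G T') < (k + 1) / sqrt R
           \<and> (\<forall>v\<in>hverts G. hdeg G T' {v} \<le> a * (k + 1) + 1)"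
proof -
  have fin: "finite G" "finite (hverts G)" using uniform_finite[OF assms(3)] .
  define W where "W = {v\<in>hverts G. hdeg G T {v} \<le> a * k}"
  have "hverts G - W = {v\<in>hverts G. hdeg G T {v} > a * hsize G T}"
    unfolding W_def T_size by auto
  then have "real (card (hverts G - W)) \<le> \<beta> * real (card (hverts G))"
    using card_high_hdeg_le[OF assms(3) T_nonneg assms(5,6)] by simp
  moreover have "card (hverts G - W) = card (hverts G) - card W" "card W \<le> card (hverts G)"
    using fin(2) unfolding W_def by (auto intro: card_Diff_subset card_mono finite_subset)
  ultimately have "real (card W) \<ge> (1 - \<beta>) * real (card (hverts G))"
    by (simp add: of_nat_diff algebra_simps)
  then have "janson p R (induced G W)"
    using assms(4) unfolding robustly_janson_def W_def by auto
  then obtain \<nu> where \<nu>_nonneg: "\<forall>E\<in>G. \<nu> E \<ge> 0" and \<nu>_support: "\<forall>E\<in>G. \<not> E \<subseteq> W \<longrightarrow> \<nu> E = 0"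
    and \<nu>_size: "hsize G \<nu> = 1" and \<nu>_Lambda: "Lambda p G \<nu> < 1 / R"
    using janson_induced_unit_weight[OF assms(1) fin] by blast
  have "sqrt (Lambda p G (\<lambda>E. T E + \<nu> E)) \<le> sqrt (Lambda p G T) + sqrt (Lambda p G \<nu>)"
    by (rule sqrt_Lambda_add_le[OF assms(1)])
  also have "sqrt (Lambda p G \<nu>) < 1 / sqrt R"
    using \<nu>_Lambda real_sqrt_less_mono by (fastforce simp: real_sqrt_divide)
  finally have "sqrt (Lambda p G (\<lambda>E. T E + \<nu> E)) < (k + 1) / sqrt R"
    using T_Lambda by (simp add: add_divide_distrib)
  moreover have "hdeg G (\<lambda>E. T E + \<nu> E) {v} \<le> a * (k + 1) + 1" if v: "v \<in> hverts G" for v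
  proof (cases "v \<in> W")
    case True
    then have "hdeg G T {v} \<le> a * k" unfolding W_def by simp
    moreover have "hdeg G \<nu> {v} \<le> 1" using hdeg_le_hsize[OF fin(1) \<nu>_nonneg] \<nu>_size by metis
    ultimately show ?thesis using \<open>a > 0\<close> by (simp add: hdeg_add algebra_simps)
  next
    case False
    then have "hdeg G \<nu> {v} = 0" unfolding hdeg_def using \<nu>_support by (intro sum.neutral) auto
    moreover have "hdeg G T {v} \<le> a * k + 1" using T_deg v by blast
    ultimately show ?thesis using \<open>a > 0\<close> by (simp add: hdeg_add algebra_simps)
  qed
  moreover have "\<forall>E\<in>G. T E + \<nu> E \<ge> 0" using T_nonneg \<nu>_nonneg by simp
  moreover have "hsize G (\<lambda>E. T E + \<nu> E) = k + 1" using T_size \<nu>_size by (simp add: hsize_add)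
  ultimately show ?thesis by (intro exI[of _ "\<lambda>E. T E + \<nu> E"]) blast
qed

lemma greedy_weight:
  fixes a :: real and k :: nat
  assumes "p > 0" "R > 0" "uniform s G" "robustly_janson p R \<beta> G"
    and "a > 0" "real s \<le> a * (\<beta> * real (card (hverts G)))"
  shows "\<exists>T. (\<forall>E\<in>G. T E \<ge> 0) \<and> hsize G T = Suc k \<and> sqrt (Lambda p G T) < Suc k / sqrt R
           \<and> (\<forall>v\<in>hverts G. hdeg G T {v} \<le> a * Suc k + 1)"
proof (induction k)
  case 0
  have "hsize G (\<lambda>_. 0) = 0" "Lambda p G (\<lambda>_. 0) = 0" "hdeg G (\<lambda>_. 0) L = 0" for L
    unfolding hsize_def Lambda_def hdeg_def by simp_all
  then show ?case using greedy_round[OF assms, of "\<lambda>_. 0" 0] by simp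
next
  case (Suc k)
  then obtain T where "\<forall>E\<in>G. T E \<ge> 0" "hsize G T = Suc k" "sqrt (Lambda p G T) \<le> Suc k / sqrt R"
    "\<forall>v\<in>hverts G. hdeg G T {v} \<le> a * Suc k + 1"
    by (auto dest: less_imp_le)
  from greedy_round[OF assms this] show ?case by (simp add: add.commute)
qed

lemma robustly_janson_weight_small_degrees:
  assumes "R > 0" "p > 0" "\<beta> > 0" "uniform s G" "robustly_janson p R \<beta> G"
  shows "\<exists>T. (\<forall>E\<in>G. T E \<ge> 0) \<and> hsize G T \<noteq> 0 \<and> Lambda p G T < (hsize G T)\<^sup>2 / R
           \<and> (\<Sum>v\<in>hverts G. (hdeg G T {v})\<^sup>2)
               \<le> 2 * real s ^ 2 * (hsize G T)\<^sup>2 / (\<beta> * real (card (hverts G)))"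
proof (cases "hverts G = {}")
  case True
  \<comment> \<open>the degree bound degenerates to \<open>0 \<le> 0\<close>, its right-hand side being a division by zero\<close>
  then have "janson p R (induced G {})" using assms(5) unfolding robustly_janson_def by simp
  then obtain \<nu> where "\<forall>E\<in>G. \<nu> E \<ge> 0" "hsize G \<nu> = 1" "Lambda p G \<nu> < 1 / R"
    using janson_induced_unit_weight[OF assms(2) uniform_finite[OF assms(4)]] by metis
  with True show ?thesis by (intro exI[of _ \<nu>]) simp
next
  case False
  define n where "n = real (card (hverts G))"
  have "n > 0" using False uniform_finite(2)[OF assms(4)] unfolding n_def by (simp add: card_gt_0_iff)
  from False obtain v E where "E \<in> G" "v \<in> E" unfolding hverts_def by blast
  then have "s > 0" using assms(4) unfolding uniform_def by (metis card_gt_0_iff empty_iff)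
  define a where "a = real s / (\<beta> * n)"
  have "a > 0" using \<open>s > 0\<close> \<open>n > 0\<close> assms(3) unfolding a_def by simp
  obtain K :: nat where "1 / a \<le> K" using real_arch_simple by blast
  define N where "N = real (Suc K)"
  have "1 \<le> a * N" using \<open>1 / a \<le> K\<close> \<open>a > 0\<close> unfolding N_def by (simp add: field_simps)
  have "real s \<le> a * (\<beta> * n)" using \<open>n > 0\<close> assms(3) unfolding a_def by simp
  then obtain T where T_nonneg: "\<forall>E\<in>G. T E \<ge> 0" and T_size: "hsize G T = N"
    and T_Lambda: "sqrt (Lambda p G T) < N / sqrt R"
    and T_deg: "\<forall>v\<in>hverts G. hdeg G T {v} \<le> a * N + 1"
    using greedy_weight[OF assms(2,1,4,5) \<open>a > 0\<close>] unfolding N_def n_def by blast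
  have "Lambda p G T = (sqrt (Lambda p G T))\<^sup>2" using Lambda_nonneg[OF assms(2), of G T] by simp
  also have "\<dots> < (N / sqrt R)\<^sup>2"
    using T_Lambda Lambda_nonneg[OF assms(2), of G T] by (intro power_strict_mono) auto
  finally have "Lambda p G T < (hsize G T)\<^sup>2 / R"
    using assms(1) T_size by (simp add: power_divide)
  moreover have "\<forall>v\<in>hverts G. hdeg G T {v} \<le> 2 * a * N" using T_deg \<open>1 \<le> a * N\<close> by force
  then have "(\<Sum>v\<in>hverts G. (hdeg G T {v})\<^sup>2) \<le> (2 * a * N) * (real s * N)"
    using sum_hdeg_singleton_sq_le[OF assms(4) T_nonneg] T_size by simp
  moreover have "(2 * a * N) * (real s * N) = 2 * real s ^ 2 * N\<^sup>2 / (\<beta> * n)"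
    unfolding a_def by (simp add: power2_eq_square)
  ultimately show ?thesis using T_nonneg T_size unfolding N_def n_def by (intro exI[of _ T]) simp
qed

theorem lemma7p5:
  fixes s :: nat and R p \<beta> :: real and G :: "'a set set"
  assumes "R > 0" "p > 0" "\<beta> > 0"
    and "uniform s G"
    and "\<forall>W. W \<subseteq> hverts G \<and> real (card W) \<ge> (1 - \<beta>) * real (card (hverts G))
           \<longrightarrow> janson p R (induced G W)"
  shows "\<exists>\<mu>. (\<forall>E\<in>G. \<mu> E \<ge> 0) \<and> hsize G \<mu> = sqrt R
           \<and> Lambda p G \<mu> < (hsize G \<mu>)\<^sup>2 / R
           \<and> (\<Sum>v\<in>hverts G. (hdeg G \<mu> {v})\<^sup>2)
               \<le> 2 * real s ^ 2 * (hsize G \<mu>)\<^sup>2 / (\<beta> * real (card (hverts G)))"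
proof -
  obtain T where T_nonneg: "\<forall>E\<in>G. T E \<ge> 0" and "hsize G T \<noteq> 0"
    and T_Lambda: "Lambda p G T < (hsize G T)\<^sup>2 / R"
    and T_deg: "(\<Sum>v\<in>hverts G. (hdeg G T {v})\<^sup>2)
                  \<le> 2 * real s ^ 2 * (hsize G T)\<^sup>2 / (\<beta> * real (card (hverts G)))"
    using robustly_janson_weight_small_degrees[OF assms(1-4)] assms(5)
    unfolding robustly_janson_def by blast
  define c where "c = sqrt R / hsize G T"
  have "c > 0" using assms(1) \<open>hsize G T \<noteq> 0\<close> hsize_nonneg[OF T_nonneg] unfolding c_def by simp
  define \<mu> where "\<mu> = (\<lambda>E. c * T E)"
  have \<mu>_size: "hsize G \<mu> = sqrt R" using \<open>hsize G T \<noteq> 0\<close> unfolding \<mu>_def hsize_scale c_def by simp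
  have \<mu>_Lambda: "Lambda p G \<mu> < (hsize G \<mu>)\<^sup>2 / R"
    unfolding \<mu>_def using Lambda_lt_scale_iff[of c p G T R] \<open>c > 0\<close> T_Lambda by simp
  have "(\<Sum>v\<in>hverts G. (hdeg G \<mu> {v})\<^sup>2) = c\<^sup>2 * (\<Sum>v\<in>hverts G. (hdeg G T {v})\<^sup>2)"
    unfolding \<mu>_def by (rule sum_hdeg_singleton_sq_scale)
  also have "\<dots> \<le> c\<^sup>2 * (2 * real s ^ 2 * (hsize G T)\<^sup>2 / (\<beta> * real (card (hverts G))))"
    using T_deg by (rule mult_left_mono) simp
  also have "\<dots> = 2 * real s ^ 2 * (hsize G \<mu>)\<^sup>2 / (\<beta> * real (card (hverts G)))"
    unfolding \<mu>_def hsize_scale by (simp add: power_mult_distrib)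
  finally have \<mu>_deg: "(\<Sum>v\<in>hverts G. (hdeg G \<mu> {v})\<^sup>2)
      \<le> 2 * real s ^ 2 * (hsize G \<mu>)\<^sup>2 / (\<beta> * real (card (hverts G)))" .
  have "\<forall>E\<in>G. \<mu> E \<ge> 0" using T_nonneg \<open>c > 0\<close> unfolding \<mu>_def by simp
  with \<mu>_size \<mu>_Lambda \<mu>_deg show ?thesis by blast
qed

end
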